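(* Let $G$ and $H$ be Left dead-ends, and assume that no subposition of $G$ or of $H$ has a dominated option. If $G$ and $H$ are equal (i.e. $G \geq H$ and $H \geq G$), then $G \cong H$.
   Context: All games are finite partizan games; $\cong$ denotes identity of game trees. $o(G)$ is the misère outcome class, ordered $\mathscr{L} > \mathscr{N} > \mathscr{R}$, $\mathscr{L} > \mathscr{P} > \mathscr{R}$. A universe is a set of games closed under options, disjunctive sums, conjugates, and forming $\{\mathscr{G}^L\mid\mathscr{G}^R\}$ from nonempty finite subsets of it. For a universe $\mathcal{U}$, $G\geq_\mathcal{U} H$ means $o(G+X)\geq o(H+X)$ for all $X\in\mathcal{U}$. A Left dead-end is a game every subposition of which has no Left option. For Left dead-ends $G,H$, write $G\geq H$ if $G\geq_\mathcal{U} H$ for every universe $\mathcal{U}$. A Right option $G^{R_1}$ of a Left dead-end $G$ is dominated if $G^{R_1}\geq G^{R_2}$ for some other Right option $G^{R_2}$ of $G$. *)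

theory Defs
  imports Main "HOL-Library.FSet"
begin

text \<open>A game is given by its finite set of Left options and its finite set of Right options.
  Equality of terms of this type is identity of game trees (G \<cong> H).\<close>
datatype game = Game (lopts: "game fset") (ropts: "game fset")

text \<open>Misere play: a player who cannot move wins.
  mis G = (Left wins moving first, Right wins moving first).\<close>
primrec mis :: "game \<Rightarrow> bool \<times> bool" where
  "mis (Game A B) =
     (A = {||} \<or> fBex (mis |`| A) (\<lambda>p. \<not> snd p),
      B = {||} \<or> fBex (mis |`| B) (\<lambda>p. \<not> fst p))"

datatype outcome = OL | ON | OP | OR

definition outc :: "game \<Rightarrow> outcome" where
  "outc G = (case mis G of
      (True, False) \<Rightarrow> OL
    | (True, True) \<Rightarrow> ON
    | (False, False) \<Rightarrow> OP
    | (False, True) \<Rightarrow> OR)"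

definition outcome_ge :: "outcome \<Rightarrow> outcome \<Rightarrow> bool" where
  "outcome_ge x y \<longleftrightarrow> x = y \<or> x = OL \<or> y = OR"

primrec neg :: "game \<Rightarrow> game" where
  "neg (Game A B) = Game (neg |`| B) (neg |`| A)"

text \<open>Disjunctive sum. plus_aux FA FB H computes G + H where FA (resp. FB) are the functions
  X \<mapsto> G^L + X (resp. X \<mapsto> G^R + X).\<close>
primrec plus_aux :: "(game \<Rightarrow> game) fset \<Rightarrow> (game \<Rightarrow> game) fset \<Rightarrow> game \<Rightarrow> game" where
  "plus_aux FA FB (Game C D) =
     Game ((\<lambda>f. f (Game C D)) |`| FA |\<union>| plus_aux FA FB |`| C)
          ((\<lambda>f. f (Game C D)) |`| FB |\<union>| plus_aux FA FB |`| D)"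

primrec gplus :: "game \<Rightarrow> game \<Rightarrow> game" where
  "gplus (Game A B) = plus_aux (gplus |`| A) (gplus |`| B)"

lemma gplus_Game:
  "gplus (Game A B) (Game C D) =
     Game ((\<lambda>a. gplus a (Game C D)) |`| A |\<union>| (\<lambda>c. gplus (Game A B) c) |`| C)
          ((\<lambda>b. gplus b (Game C D)) |`| B |\<union>| (\<lambda>d. gplus (Game A B) d) |`| D)"
proof -
  have "plus_aux (gplus |`| A) (gplus |`| B) (Game C D) =
     Game ((\<lambda>a. gplus a (Game C D)) |`| A |\<union>| (\<lambda>c. plus_aux (gplus |`| A) (gplus |`| B) c) |`| C)
          ((\<lambda>b. gplus b (Game C D)) |`| B |\<union>| (\<lambda>d. plus_aux (gplus |`| A) (gplus |`| B) d) |`| D)"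
    by (simp add: fset.map_comp o_def)
  then show ?thesis by simp
qed

definition is_option :: "game \<Rightarrow> game \<Rightarrow> bool" where
  "is_option X G \<longleftrightarrow> X |\<in>| lopts G \<or> X |\<in>| ropts G"

inductive subpos :: "game \<Rightarrow> game \<Rightarrow> bool" where
  subpos_refl: "subpos G G"
| subpos_step: "subpos K G \<Longrightarrow> is_option X K \<Longrightarrow> subpos X G"

definition universe :: "game set \<Rightarrow> bool" where
  "universe U \<longleftrightarrow>
     (\<forall>G\<in>U. \<forall>X. is_option X G \<longrightarrow> X \<in> U) \<and>
     (\<forall>G\<in>U. \<forall>H\<in>U. gplus G H \<in> U) \<and>
     (\<forall>G\<in>U. neg G \<in> U) \<and>
     (\<forall>A B. A \<noteq> {||} \<and> B \<noteq> {||} \<and> fset A \<subseteq> U \<and> fset B \<subseteq> U \<longrightarrow> Game A B \<in> U)"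

definition ge_in :: "game set \<Rightarrow> game \<Rightarrow> game \<Rightarrow> bool" where
  "ge_in U G H \<longleftrightarrow> (\<forall>X\<in>U. outcome_ge (outc (gplus G X)) (outc (gplus H X)))"

definition left_dead_end :: "game \<Rightarrow> bool" where
  "left_dead_end G \<longleftrightarrow> (\<forall>K. subpos K G \<longrightarrow> lopts K = {||})"

text \<open>For Left dead-ends: G \<ge> H iff G \<ge>_U H for every universe U.\<close>
definition de_ge :: "game \<Rightarrow> game \<Rightarrow> bool" where
  "de_ge G H \<longleftrightarrow> (\<forall>U. universe U \<longrightarrow> ge_in U G H)"

definition has_dominated_option :: "game \<Rightarrow> bool" where
  "has_dominated_option G \<longleftrightarrow>
     (\<exists>R1 R2. R1 |\<in>| ropts G \<and> R2 |\<in>| ropts G \<and> R1 \<noteq> R2 \<and> de_ge R1 R2)"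

end

(* For Left dead-ends, G \<ge> H can always be refuted with Right moving first: a game X that
   separates them with Left moving first becomes such a witness inside {.|X}.  Consequently, if
   G \<ge> H then every Right option of G is \<ge> some Right option of H, and H has no Right option
   if G has none.  When G and H are equal this gives G^R \<ge> H^R' \<ge> G^R'' for each G^R; as G has no
   dominated option, G^R = G^R'', so G^R and H^R' are equal and, by induction, identical.
   Left dead-ends have no Left options, so G and H have the same options. *)

theory Submission
  imports Defs
begin

abbreviation left_wins_first :: "game \<Rightarrow> bool" where
  "left_wins_first G \<equiv> fst (mis G)"

abbreviation right_wins_first :: "game \<Rightarrow> bool" where
  "right_wins_first G \<equiv> snd (mis G)"

lemma left_wins_first_iff:
  "left_wins_first G \<longleftrightarrow> lopts G = {||} \<or> (\<exists>G'. G' |\<in>| lopts G \<and> \<not> right_wins_first G')"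
  by (cases G) auto

lemma right_wins_first_iff:
  "right_wins_first G \<longleftrightarrow> ropts G = {||} \<or> (\<exists>G'. G' |\<in>| ropts G \<and> \<not> left_wins_first G')"
  by (cases G) auto

lemma lopts_gplus: "lopts (gplus G H) = (\<lambda>G'. gplus G' H) |`| lopts G |\<union>| gplus G |`| lopts H"
  by (cases G; cases H) (simp only: gplus_Game game.sel)

lemma ropts_gplus: "ropts (gplus G H) = (\<lambda>G'. gplus G' H) |`| ropts G |\<union>| gplus G |`| ropts H"
  by (cases G; cases H) (simp only: gplus_Game game.sel)

lemma left_wins_first_gplus:
  "left_wins_first (gplus G H) \<longleftrightarrow>
     lopts G = {||} \<and> lopts H = {||} \<or>
     (\<exists>G'. G' |\<in>| lopts G \<and> \<not> right_wins_first (gplus G' H)) \<or>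
     (\<exists>H'. H' |\<in>| lopts H \<and> \<not> right_wins_first (gplus G H'))"
  unfolding left_wins_first_iff[of "gplus G H"] lopts_gplus by auto

lemma right_wins_first_gplus:
  "right_wins_first (gplus G H) \<longleftrightarrow>
     ropts G = {||} \<and> ropts H = {||} \<or>
     (\<exists>G'. G' |\<in>| ropts G \<and> \<not> left_wins_first (gplus G' H)) \<or>
     (\<exists>H'. H' |\<in>| ropts H \<and> \<not> left_wins_first (gplus G H'))"
  unfolding right_wins_first_iff[of "gplus G H"] ropts_gplus by auto

lemma left_wins_first_gplus_no_lopts:
  "lopts G = {||} \<Longrightarrow> lopts H = {||} \<Longrightarrow> left_wins_first (gplus G H)"
  by (simp add: left_wins_first_gplus)

lemma outcome_ge_outc_iff:
  "outcome_ge (outc G) (outc H) \<longleftrightarrow>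
     (left_wins_first H \<longrightarrow> left_wins_first G) \<and> (right_wins_first G \<longrightarrow> right_wins_first H)"
  by (cases "mis G"; cases "mis H") (auto simp: outcome_ge_def outc_def split: bool.splits)

lemma universe_UNIV: "universe UNIV"
  by (simp add: universe_def)

lemma de_ge_iff:
  "de_ge G H \<longleftrightarrow>
     (\<forall>X. (left_wins_first (gplus H X) \<longrightarrow> left_wins_first (gplus G X)) \<and>
          (right_wins_first (gplus G X) \<longrightarrow> right_wins_first (gplus H X)))"
  unfolding de_ge_def ge_in_def outcome_ge_outc_iff using universe_UNIV by blast

lemma de_ge_trans: "de_ge G H \<Longrightarrow> de_ge H K \<Longrightarrow> de_ge G K"
  unfolding de_ge_iff by blast

lemma subpos_trans: "subpos K A \<Longrightarrow> subpos A G \<Longrightarrow> subpos K G"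
  by (induction rule: subpos.induct) (auto intro: subpos_step)

lemma subpos_of_ropt: "A |\<in>| ropts G \<Longrightarrow> subpos K A \<Longrightarrow> subpos K G"
  by (meson is_option_def subpos.simps subpos_trans)

lemma left_dead_end_lopts: "left_dead_end G \<Longrightarrow> lopts G = {||}"
  by (simp add: left_dead_end_def subpos_refl)

lemma left_dead_end_ropt: "left_dead_end G \<Longrightarrow> A |\<in>| ropts G \<Longrightarrow> left_dead_end A"
  unfolding left_dead_end_def using subpos_of_ropt by blast

lemma left_dead_end_ropt_lopts: "left_dead_end G \<Longrightarrow> A |\<in>| ropts G \<Longrightarrow> lopts A = {||}"
  by (simp add: left_dead_end_lopts left_dead_end_ropt)

lemma not_de_ge_right_first_witness:
  assumes "left_dead_end H" "\<not> de_ge G H"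
  obtains Z where "right_wins_first (gplus G Z)" "\<not> right_wins_first (gplus H Z)"
proof -
  from assms(2) obtain X where
    "left_wins_first (gplus H X) \<and> \<not> left_wins_first (gplus G X) \<or>
     right_wins_first (gplus G X) \<and> \<not> right_wins_first (gplus H X)"
    unfolding de_ge_iff by blast
  then show thesis
  proof
    assume X: "left_wins_first (gplus H X) \<and> \<not> left_wins_first (gplus G X)"
    \<comment> \<open>In H + ?Z every Right move in H leaves Left without a move, so Right must move to H + X.\<close>
    let ?Z = "Game {||} {|X|}"
    have "right_wins_first (gplus G ?Z)"
      using X by (auto simp: right_wins_first_gplus)
    moreover have "\<not> right_wins_first (gplus H ?Z)"
      using X assms(1)
      by (auto simp: right_wins_first_gplus left_dead_end_ropt_lopts left_wins_first_gplus_no_lopts)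
    ultimately show thesis by (rule that)
  qed (use that in blast)
qed

lemma de_ge_no_ropts:
  assumes "left_dead_end H" "ropts G = {||}" "de_ge G H"
  shows "ropts H = {||}"
proof -
  let ?zero = "Game {||} {||}"
  have "right_wins_first (gplus G ?zero)"
    using assms(2) by (simp add: right_wins_first_gplus)
  then have "right_wins_first (gplus H ?zero)"
    using assms(3) de_ge_iff by blast
  then show ?thesis
    using assms(1)
    by (auto simp: right_wins_first_gplus left_dead_end_ropt_lopts left_wins_first_gplus_no_lopts)
qed

lemma de_ge_ropt_ge_ropt:
  assumes "left_dead_end G" "left_dead_end H" "ropts H \<noteq> {||}" "de_ge G H" "A |\<in>| ropts G"
  shows "\<exists>B. B |\<in>| ropts H \<and> de_ge A B"
proof (rule ccontr)
  assume "\<not> ?thesis"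
  then have "\<forall>B. B |\<in>| ropts H \<longrightarrow>
      (\<exists>Z. right_wins_first (gplus A Z) \<and> \<not> right_wins_first (gplus B Z))"
    using not_de_ge_right_first_witness left_dead_end_ropt assms(2) by metis
  then obtain Z where Z: "\<And>B. B |\<in>| ropts H \<Longrightarrow>
      right_wins_first (gplus A (Z B)) \<and> \<not> right_wins_first (gplus B (Z B))"
    by metis
  \<comment> \<open>Left's moves in X lead to the distinguishers; Right's move to 0 leaves H, where
    Left cannot move and so wins.\<close>
  define X where "X = Game (Z |`| ropts H) {|Game {||} {||}|}"
  have "\<not> left_wins_first (gplus A X)"
    using Z assms(1,3,5) by (auto simp: left_wins_first_gplus X_def left_dead_end_ropt_lopts)
  then have right_wins_GX: "right_wins_first (gplus G X)"
    using assms(5) by (auto simp: right_wins_first_gplus)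
  have "left_wins_first (gplus B X)" if "B |\<in>| ropts H" for B
    using Z[OF that] that by (simp add: left_wins_first_gplus X_def) blast
  then have "\<not> right_wins_first (gplus H X)"
    using assms(2)
    by (auto simp: right_wins_first_gplus X_def left_dead_end_lopts left_wins_first_gplus_no_lopts)
  with right_wins_GX show False
    using assms(4) de_ge_iff by blast
qed

lemma ex_equivalent_ropt:
  assumes "left_dead_end G" "left_dead_end H" "\<not> has_dominated_option G"
    and "de_ge G H" "de_ge H G" "A |\<in>| ropts G"
  shows "\<exists>B. B |\<in>| ropts H \<and> de_ge A B \<and> de_ge B A"
proof -
  have "ropts H \<noteq> {||}"
    using de_ge_no_ropts[OF assms(1) _ assms(5)] assms(6) by auto
  then obtain B where B: "B |\<in>| ropts H" "de_ge A B"
    using de_ge_ropt_ge_ropt[OF assms(1,2) _ assms(4,6)] by blast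
  moreover obtain A' where A': "A' |\<in>| ropts G" "de_ge B A'"
    using de_ge_ropt_ge_ropt[OF assms(2,1) _ assms(5) B(1)] assms(6) by auto
  moreover have "A' = A"
    using assms(3,6) A' de_ge_trans[OF B(2) A'(2)] unfolding has_dominated_option_def by blast
  ultimately show ?thesis by blast
qed

theorem mainTheorem2:
  assumes "left_dead_end G" and "left_dead_end H"
    and "\<forall>K. subpos K G \<longrightarrow> \<not> has_dominated_option K"
    and "\<forall>K. subpos K H \<longrightarrow> \<not> has_dominated_option K"
    and "de_ge G H" and "de_ge H G"
  shows "G = H"
  using assms
proof (induction G arbitrary: H)
  case (Game LG RG)
  let ?G = "Game LG RG"
  have ropt_eq: "A = B" if "A |\<in>| RG" "B |\<in>| ropts H" "de_ge A B" "de_ge B A" for A B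
    using Game.IH(2) that Game.prems(1-4) left_dead_end_ropt[of ?G] left_dead_end_ropt[of H]
      subpos_of_ropt[of A ?G] subpos_of_ropt[of B H] by simp
  have "\<not> has_dominated_option ?G" "\<not> has_dominated_option H"
    using Game.prems(3,4) subpos_refl by blast+
  then have "RG = ropts H"
    using ex_equivalent_ropt[OF Game.prems(1,2) _ Game.prems(5,6)]
      ex_equivalent_ropt[OF Game.prems(2,1) _ Game.prems(6,5)] ropt_eq
    by (metis fset_eqI game.sel(2))
  then show ?case
    using left_dead_end_lopts[OF Game.prems(1)] left_dead_end_lopts[OF Game.prems(2)]
    by (simp add: game.expand)
qed

end
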